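(* Let $X_f,Y_f,Z_f\subset\mathbb{R}$, $D_f=X_f\times Y_f\times Z_f$, and let $f:D_f\to\mathbb{R}$ be a bounded function. (i) If $\mathrm{F\text{-}rank}[f]=(r_1,r_2,r_3)$ (with $r_1,r_2,r_3$ finite), then there exist a tensor $\mathcal{C}\in\mathbb{R}^{r_1\times r_2\times r_3}$ and bounded functions $f_x:X_f\to\mathbb{R}^{r_1}$, $f_y:Y_f\to\mathbb{R}^{r_2}$, $f_z:Z_f\to\mathbb{R}^{r_3}$ such that for all $(v_1,v_2,v_3)\in D_f$, $f(v_1,v_2,v_3)=\mathcal{C}\times_1 f_x(v_1)\times_2 f_y(v_2)\times_3 f_z(v_3)$. (ii) Conversely, let $\mathcal{C}\in\mathbb{R}^{r_1\times r_2\times r_3}$ be an arbitrary tensor, let $X_g,Y_g,Z_g\subset\mathbb{R}$, and let $g_x:X_g\to\mathbb{R}^{r_1}$, $g_y:Y_g\to\mathbb{R}^{r_2}$, $g_z:Z_g\to\mathbb{R}^{r_3}$ be arbitrary bounded functions. Define $g:X_g\times Y_g\times Z_g\to\mathbb{R}$ by $g(v_1,v_2,v_3)=\mathcal{C}\times_1 g_x(v_1)\times_2 g_y(v_2)\times_3 g_z(v_3)$. Then $(\mathrm{F\text{-}rank}[g])_{(i)}\le r_i$ for $i=1,2,3$.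
   Context: For $\mathcal{C}\in\mathbb{R}^{r_1\times r_2\times r_3}$ and vectors $\mathbf{a}\in\mathbb{R}^{r_1},\mathbf{b}\in\mathbb{R}^{r_2},\mathbf{c}\in\mathbb{R}^{r_3}$ (viewed as $1\times r_i$ matrices in the mode-$i$ products $\mathcal{X}\times_i\mathbf{A}:=\mathrm{fold}_i(\mathbf{A}\mathbf{X}^{(i)})$), one has $\mathcal{C}\times_1\mathbf{a}\times_2\mathbf{b}\times_3\mathbf{c}=\sum_{i,j,k}\mathcal{C}_{(i,j,k)}\mathbf{a}_{(i)}\mathbf{b}_{(j)}\mathbf{c}_{(k)}$. For a tensor $\mathcal{T}\in\mathbb{R}^{n_1\times n_2\times n_3}$, $\mathbf{T}^{(i)}$ denotes its mode-$i$ unfolding matrix (columns are the mode-$i$ fibers). For a function $h:X\times Y\times Z\to\mathbb{R}$ with $X,Y,Z\subset\mathbb{R}$, the sampled tensor set is $S[h]=\{\mathcal{T}\in\mathbb{R}^{n_1\times n_2\times n_3}: n_1,n_2,n_3\in\mathbb{N}_+,\ \exists\,\mathbf{x}\in X^{n_1},\mathbf{y}\in Y^{n_2},\mathbf{z}\in Z^{n_3}\text{ with }\mathcal{T}_{(i,j,k)}=h(\mathbf{x}_{(i)},\mathbf{y}_{(j)},\mathbf{z}_{(k)})\ \forall i,j,k\}$, and the function rank is $\mathrm{F\text{-}rank}[h]=(r_1,r_2,r_3)$ with $r_i=\sup_{\mathcal{T}\in S[h]}\mathrm{rank}(\mathbf{T}^{(i)})$; $(\mathrm{F\text{-}rank}[h])_{(i)}$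 denotes its $i$-th entry. *)

theory Defs
  imports "Jordan_Normal_Form.DL_Rank" "HOL-Library.Extended_Nat"
begin

text \<open>Third-order tensors of size n1 x n2 x n3 are represented as functions
  nat => nat => nat => real, only entries with indices below the sizes matter
  (indices are 0-based).  Vectors in R^r are functions nat => real, only
  entries with index below r matter.\<close>

definition mode_prod3 ::
  "(nat \<Rightarrow> nat \<Rightarrow> nat \<Rightarrow> real) \<Rightarrow> nat \<Rightarrow> nat \<Rightarrow> nat \<Rightarrow>
   (nat \<Rightarrow> real) \<Rightarrow> (nat \<Rightarrow> real) \<Rightarrow> (nat \<Rightarrow> real) \<Rightarrow> real" where
  "mode_prod3 C r1 r2 r3 a b c =
     (\<Sum>i<r1. \<Sum>j<r2. \<Sum>k<r3. C i j k * a i * b j * c k)"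

definition unfold1 :: "nat \<Rightarrow> nat \<Rightarrow> nat \<Rightarrow> (nat \<Rightarrow> nat \<Rightarrow> nat \<Rightarrow> real) \<Rightarrow> real mat" where
  "unfold1 n1 n2 n3 T = mat n1 (n2 * n3) (\<lambda>(i, c). T i (c mod n2) (c div n2))"

definition unfold2 :: "nat \<Rightarrow> nat \<Rightarrow> nat \<Rightarrow> (nat \<Rightarrow> nat \<Rightarrow> nat \<Rightarrow> real) \<Rightarrow> real mat" where
  "unfold2 n1 n2 n3 T = mat n2 (n1 * n3) (\<lambda>(j, c). T (c mod n1) j (c div n1))"

definition unfold3 :: "nat \<Rightarrow> nat \<Rightarrow> nat \<Rightarrow> (nat \<Rightarrow> nat \<Rightarrow> nat \<Rightarrow> real) \<Rightarrow> real mat" where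
  "unfold3 n1 n2 n3 T = mat n3 (n1 * n2) (\<lambda>(k, c). T (c mod n1) (c div n1) k)"

definition mrank :: "real mat \<Rightarrow> nat" where
  "mrank A = vec_space.rank (dim_row A) A"

definition sampled_tensors ::
  "(real \<Rightarrow> real \<Rightarrow> real \<Rightarrow> real) \<Rightarrow> real set \<Rightarrow> real set \<Rightarrow> real set \<Rightarrow>
   (nat \<times> nat \<times> nat \<times> (nat \<Rightarrow> nat \<Rightarrow> nat \<Rightarrow> real)) set" where
  "sampled_tensors h X Y Z =
     {(n1, n2, n3, T). n1 > 0 \<and> n2 > 0 \<and> n3 > 0 \<and>
        (\<exists>x y z. (\<forall>i<n1. x i \<in> X) \<and> (\<forall>j<n2. y j \<in> Y) \<and> (\<forall>k<n3. z k \<in> Z) \<and>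
                 T = (\<lambda>i j k. h (x i) (y j) (z k)))}"

definition Frank ::
  "(real \<Rightarrow> real \<Rightarrow> real \<Rightarrow> real) \<Rightarrow> real set \<Rightarrow> real set \<Rightarrow> real set \<Rightarrow>
   enat \<times> enat \<times> enat" where
  "Frank h X Y Z =
    ((SUP (n1, n2, n3, T) \<in> sampled_tensors h X Y Z. enat (mrank (unfold1 n1 n2 n3 T))),
     (SUP (n1, n2, n3, T) \<in> sampled_tensors h X Y Z. enat (mrank (unfold2 n1 n2 n3 T))),
     (SUP (n1, n2, n3, T) \<in> sampled_tensors h X Y Z. enat (mrank (unfold3 n1 n2 n3 T))))"

definition bounded_fun3 ::
  "(real \<Rightarrow> real \<Rightarrow> real \<Rightarrow> real) \<Rightarrow> real set \<Rightarrow> real set \<Rightarrow> real set \<Rightarrow> bool" where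
  "bounded_fun3 f X Y Z = (\<exists>B. \<forall>v1\<in>X. \<forall>v2\<in>Y. \<forall>v3\<in>Z. \<bar>f v1 v2 v3\<bar> \<le> B)"

definition bounded_vec_fun :: "nat \<Rightarrow> real set \<Rightarrow> (real \<Rightarrow> nat \<Rightarrow> real) \<Rightarrow> bool" where
  "bounded_vec_fun r X g = (\<exists>B. \<forall>v\<in>X. \<forall>i<r. \<bar>g v i\<bar> \<le> B)"

end

theory Submission
  imports Defs
begin

(* (ii): a mode-1 unfolding of a sampled tensor of g = C x_1 g_x x_2 g_y x_3 g_z is a sum of r_1
   rank-one matrices; modes 2 and 3 reduce to mode 1 by permuting the arguments of g.

   (i) is a skeleton (CUR) decomposition in each mode. Take a nonsingular sampled minor
   M = [f(x_i, w_j)] of the mode-1 matricization (w_j in Y x Z) of maximal size r; its columns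
   are diagonal fibres of a sampled tensor, so r <= r_1. Bordering M by any further row v and
   column w gives a singular matrix, and the vanishing of its Schur complement says
   f(v, w) = sum_a f(v, w_a) (M^-1 [f(x_i, w)]_i)_a. Hence f(v1, _, _) is a combination of the
   slices f(x_i, _, _) with the bounded coefficients f(v1, w_a). Substituting the expansions of
   all three modes into each other writes f as a mode product of these bounded coefficient
   vectors with a core built from the sampled values f(x_i, y_j, z_k). *)

lemma (in vec_space) rank_le_of_sum_of_products:
  "rank (mat n m (\<lambda>(i, j). \<Sum>a<r. u i a * w j a)) \<le> r"
proof (induction r)
  case 0
  have "mat n m (\<lambda>(i, j). \<Sum>a<0. u i a * w j a) = 0\<^sub>m n m"
    by (intro eq_matI) auto
  then show ?case using rank_0I[of m] by (metis order_refl)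
next
  case (Suc r)
  have "mat n m (\<lambda>(i, j). \<Sum>a<Suc r. u i a * w j a) =
      mat n m (\<lambda>(i, j). \<Sum>a<r. u i a * w j a) + mat n m (\<lambda>(i, j). u i r * w j r)"
    by (auto intro!: eq_matI)
  also have "rank \<dots> \<le> rank (mat n m (\<lambda>(i, j). \<Sum>a<r. u i a * w j a)) +
      rank (mat n m (\<lambda>(i, j). u i r * w j r))"
    by (rule rank_subadditive) auto
  also have "rank (mat n m (\<lambda>(i, j). u i r * w j r)) \<le> 1"
    by (rule rank_le_1_product_entries[where f = "\<lambda>i. u i r" and g = "\<lambda>j. w j r"]) auto
  finally show ?case using Suc.IH by simp
qed

lemma (in vec_space) rank_ge_of_nonsingular_cols_subset:
  assumes A: "A \<in> carrier_mat n n" and det: "det A \<noteq> 0"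
    and B: "B \<in> carrier_mat n m" and cols: "set (cols A) \<subseteq> set (cols B)"
  shows "n \<le> rank B"
proof -
  have rank: "rank A = n" using det_rank_iff[OF A] det by blast
  then have distinct: "distinct (cols A)" using non_distinct_low_rank[OF A] by fastforce
  have "lin_indpt (set (cols A))" by (rule full_rank_lin_indpt[OF A rank distinct])
  from rank_ge_card_indpt[OF B cols this] show ?thesis
    using distinct_card[OF distinct] A by simp
qed

lemma left_inverse_mult_mat_vec:
  fixes N M :: "'a :: semiring_1 mat"
  assumes "N \<in> carrier_mat m n" "M \<in> carrier_mat n m" "N * M = 1\<^sub>m m" "x \<in> carrier_vec m"
  shows "N *\<^sub>v (M *\<^sub>v x) = x"
  using assms by (simp add: assoc_mult_mat_vec[symmetric])

lemma schur_complement_zero_of_singular: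
  fixes B :: "'a :: field mat"
  assumes B: "B \<in> carrier_mat (Suc r) (Suc r)" and singular: "det B = 0"
    and N: "N \<in> carrier_mat r r" "N * mat r r (\<lambda>(i, j). B $$ (i, j)) = 1\<^sub>m r"
  shows "B $$ (r, r) = (\<Sum>a<r. B $$ (r, a) * (\<Sum>i<r. N $$ (a, i) * B $$ (i, r)))"
proof -
  obtain c where c: "c \<in> carrier_vec (Suc r)" "c \<noteq> 0\<^sub>v (Suc r)" "B *\<^sub>v c = 0\<^sub>v (Suc r)"
    using det_0_iff_vec_prod_zero_field[OF B] singular by blast
  have row_eq: "(\<Sum>j<r. B $$ (i, j) * c $ j) + B $$ (i, r) * c $ r = 0" if i: "i < Suc r" for i
  proof -
    have "(B *\<^sub>v c) $ i = 0" using c(3) i by simp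
    then show ?thesis using B c(1) i by (simp add: scalar_prod_def lessThan_atLeast0[symmetric])
  qed
  define c' where "c' = vec r (\<lambda>j. c $ j)"
  have "mat r r (\<lambda>(i, j). B $$ (i, j)) *\<^sub>v c' = vec r (\<lambda>i. - c $ r * B $$ (i, r))"
    using row_eq by (intro eq_vecI) (auto simp: c'_def scalar_prod_def lessThan_atLeast0[symmetric]
        eq_neg_iff_add_eq_0 mult.commute)
  then have c': "c' = N *\<^sub>v vec r (\<lambda>i. - c $ r * B $$ (i, r))"
    using left_inverse_mult_mat_vec[OF N(1) _ N(2), of c'] by (simp add: c'_def)
  have c_eq: "c $ j = - c $ r * (\<Sum>i<r. N $$ (j, i) * B $$ (i, r))" if j: "j < r" for j
  proof -
    have "c $ j = c' $ j" using j by (simp add: c'_def)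
    also have "\<dots> = - c $ r * (\<Sum>i<r. N $$ (j, i) * B $$ (i, r))"
      unfolding c' using N(1) j by (simp add: scalar_prod_def sum_distrib_left lessThan_atLeast0 mult_ac)
    finally show ?thesis .
  qed
  have "c $ r \<noteq> 0"
  proof
    assume "c $ r = 0"
    then have "c = 0\<^sub>v (Suc r)" using c(1) c_eq by (auto simp: less_Suc_eq vec_eq_iff)
    with c(2) show False ..
  qed
  have "B $$ (r, r) * c $ r = - (\<Sum>j<r. B $$ (r, j) * c $ j)"
    using row_eq[of r] by (simp add: eq_neg_iff_add_eq_0 add.commute)
  also have "\<dots> = (\<Sum>a<r. B $$ (r, a) * (\<Sum>i<r. N $$ (a, i) * B $$ (i, r))) * c $ r"
    using c_eq by (simp add: sum_distrib_left sum_distrib_right sum_negf[symmetric] mult_ac)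
  finally show ?thesis using \<open>c $ r \<noteq> 0\<close> by simp
qed

lemma skeleton_decomposition:
  fixes F :: "'x \<Rightarrow> 'w \<Rightarrow> 'a :: field"
  assumes size_bound: "\<And>n xs ws. \<forall>i<n. xs i \<in> X \<Longrightarrow> \<forall>j<n. ws j \<in> W \<Longrightarrow>
      det (mat n n (\<lambda>(i, j). F (xs i) (ws j))) \<noteq> 0 \<Longrightarrow> n \<le> R"
  obtains r xs ws L where "r \<le> R" "\<forall>i<r. xs i \<in> X" "\<forall>j<r. ws j \<in> W"
    "\<And>v w. v \<in> X \<Longrightarrow> w \<in> W \<Longrightarrow> F v w = (\<Sum>a<r. F v (ws a) * (\<Sum>i<r. L a i * F (xs i) w))"
proof -
  define sizes where "sizes = {n. \<exists>xs ws. (\<forall>i<n. xs i \<in> X) \<and> (\<forall>j<n. ws j \<in> W) \<and>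
      det (mat n n (\<lambda>(i, j). F (xs i) (ws j))) \<noteq> 0}"
  have sizes_le: "sizes \<subseteq> {..R}" using size_bound by (auto simp: sizes_def)
  have "mat 0 0 (\<lambda>(i, j). F (xs i) (ws j)) = 1\<^sub>m 0" for xs ws by (intro eq_matI) auto
  then have "0 \<in> sizes" by (auto simp: sizes_def)
  define r where "r = Max sizes"
  have finite: "finite sizes" using sizes_le finite_subset by blast
  then have "r \<in> sizes" unfolding r_def using Max_in \<open>0 \<in> sizes\<close> by blast
  then obtain xs ws where xs: "\<forall>i<r. xs i \<in> X" and ws: "\<forall>j<r. ws j \<in> W"
    and det: "det (mat r r (\<lambda>(i, j). F (xs i) (ws j))) \<noteq> 0"
    by (auto simp: sizes_def)
  obtain N where N: "N \<in> carrier_mat r r" "N * mat r r (\<lambda>(i, j). F (xs i) (ws j)) = 1\<^sub>m r"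
    using det_non_zero_imp_unit[OF _ det, of r "()"] by (auto simp: Units_def ring_mat_def)
  have expansion: "F v w = (\<Sum>a<r. F v (ws a) * (\<Sum>i<r. N $$ (a, i) * F (xs i) w))"
    if v: "v \<in> X" and w: "w \<in> W" for v w
  proof -
    define B where "B = mat (Suc r) (Suc r) (\<lambda>(i, j). F ((xs(r := v)) i) ((ws(r := w)) j))"
    have "det B = 0"
    proof (rule ccontr)
      assume "det B \<noteq> 0"
      moreover have "\<forall>i<Suc r. (xs(r := v)) i \<in> X" "\<forall>j<Suc r. (ws(r := w)) j \<in> W"
        using xs ws v w by (auto simp: less_Suc_eq)
      ultimately have "Suc r \<in> sizes" unfolding sizes_def B_def by blast
      then show False using Max_ge[OF finite] r_def by fastforce
    qed
    moreover have "mat r r (\<lambda>(i, j). B $$ (i, j)) = mat r r (\<lambda>(i, j). F (xs i) (ws j))"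
      by (intro eq_matI) (auto simp: B_def)
    ultimately have "B $$ (r, r) = (\<Sum>a<r. B $$ (r, a) * (\<Sum>i<r. N $$ (a, i) * B $$ (i, r)))"
      using N by (intro schur_complement_zero_of_singular) (auto simp: B_def)
    then show ?thesis by (simp add: B_def)
  qed
  show ?thesis
  proof (rule that[OF _ xs ws expansion])
    show "r \<le> R" using \<open>r \<in> sizes\<close> sizes_le by auto
  qed
qed

lemma mode_prod3_nested:
  "mode_prod3 C r1 r2 r3 a b c = (\<Sum>i<r1. a i * (\<Sum>j<r2. b j * (\<Sum>k<r3. c k * C i j k)))"
  unfolding mode_prod3_def by (simp add: sum_distrib_left mult_ac)

lemma mode_prod3_swap12:
  "mode_prod3 C r1 r2 r3 a b c = mode_prod3 (\<lambda>j i k. C i j k) r2 r1 r3 b a c"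
  unfolding mode_prod3_def by (subst sum.swap) (simp add: mult_ac)

lemma mode_prod3_rotate:
  "mode_prod3 C r1 r2 r3 a b c = mode_prod3 (\<lambda>k i j. C i j k) r3 r1 r2 c a b"
proof -
  have "mode_prod3 C r1 r2 r3 a b c = (\<Sum>i<r1. \<Sum>k<r3. \<Sum>j<r2. C i j k * a i * b j * c k)"
    unfolding mode_prod3_def by (simp add: sum.swap[of _ "{..<r2}"])
  also have "\<dots> = (\<Sum>k<r3. \<Sum>i<r1. \<Sum>j<r2. C i j k * a i * b j * c k)"
    by (rule sum.swap)
  finally show ?thesis unfolding mode_prod3_def by (simp add: mult_ac)
qed

lemma mode_prod3_mode1_lincomb:
  "mode_prod3 T n r2 r3 (\<lambda>i. \<Sum>a<r1. x a * L a i) y z =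
   mode_prod3 (\<lambda>a j k. \<Sum>i<n. L a i * T i j k) r1 r2 r3 x y z"
proof -
  have "mode_prod3 T n r2 r3 (\<lambda>i. \<Sum>a<r1. x a * L a i) y z =
      (\<Sum>i<n. \<Sum>a<r1. x a * L a i * (\<Sum>j<r2. y j * (\<Sum>k<r3. z k * T i j k)))"
    by (simp add: mode_prod3_nested sum_distrib_right)
  also have "\<dots> = (\<Sum>a<r1. x a * (\<Sum>j<r2. y j * (\<Sum>k<r3. z k * (\<Sum>i<n. L a i * T i j k))))"
    by (subst sum.swap) (simp add: sum_distrib_left sum_distrib_right mult_ac sum.swap[of _ "{..<n}"])
  finally show ?thesis by (simp add: mode_prod3_nested)
qed

lemma mode_prod3_mode1_lincomb_rotate:
  "mode_prod3 T n r2 r3 (\<lambda>i. \<Sum>a<r1. x a * L a i) y z =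
   mode_prod3 (\<lambda>k a j. \<Sum>i<n. L a i * T i j k) r3 r1 r2 z x y"
  unfolding mode_prod3_mode1_lincomb by (rule mode_prod3_rotate)

lemma unfold2_eq_unfold1_swap12:
  "unfold2 n1 n2 n3 T = unfold1 n2 n1 n3 (\<lambda>j i k. T i j k)"
  unfolding unfold1_def unfold2_def by (simp add: mult.commute)

lemma unfold3_eq_unfold1_rotate:
  "unfold3 n1 n2 n3 T = unfold1 n3 n1 n2 (\<lambda>k i j. T i j k)"
  unfolding unfold1_def unfold3_def ..

lemma sampled_tensorsI:
  assumes "n1 > 0" "n2 > 0" "n3 > 0" "\<forall>i<n1. x i \<in> X" "\<forall>j<n2. y j \<in> Y" "\<forall>k<n3. z k \<in> Z"
  shows "(n1, n2, n3, \<lambda>i j k. h (x i) (y j) (z k)) \<in> sampled_tensors h X Y Z"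
  using assms unfolding sampled_tensors_def by blast

lemma sampled_tensorsE:
  assumes "t \<in> sampled_tensors h X Y Z"
  obtains n1 n2 n3 x y z where "n1 > 0" "n2 > 0" "n3 > 0"
    "\<forall>i<n1. x i \<in> X" "\<forall>j<n2. y j \<in> Y" "\<forall>k<n3. z k \<in> Z"
    "t = (n1, n2, n3, \<lambda>i j k. h (x i) (y j) (z k))"
  using assms unfolding sampled_tensors_def by blast

lemma sampled_tensors_swap12:
  "sampled_tensors (\<lambda>y x z. f x y z) Y X Z =
     (\<lambda>(n1, n2, n3, T). (n2, n1, n3, \<lambda>j i k. T i j k)) ` sampled_tensors f X Y Z"
proof (intro equalityI subsetI)
  fix t assume "t \<in> sampled_tensors (\<lambda>y x z. f x y z) Y X Z"
  then obtain n1 n2 n3 y x z where "n1 > 0" "n2 > 0" "n3 > 0" "\<forall>i<n1. y i \<in> Y"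
    "\<forall>j<n2. x j \<in> X" "\<forall>k<n3. z k \<in> Z" "t = (n1, n2, n3, \<lambda>i j k. f (x j) (y i) (z k))"
    by (rule sampled_tensorsE)
  then show "t \<in> (\<lambda>(n1, n2, n3, T). (n2, n1, n3, \<lambda>j i k. T i j k)) ` sampled_tensors f X Y Z"
    by (intro image_eqI[OF _ sampled_tensorsI[of n2 n1 n3 x X y Y z Z f]]) auto
next
  fix t assume "t \<in> (\<lambda>(n1, n2, n3, T). (n2, n1, n3, \<lambda>j i k. T i j k)) ` sampled_tensors f X Y Z"
  then obtain n1 n2 n3 x y z where "n1 > 0" "n2 > 0" "n3 > 0" "\<forall>i<n1. x i \<in> X"
    "\<forall>j<n2. y j \<in> Y" "\<forall>k<n3. z k \<in> Z" "t = (n2, n1, n3, \<lambda>j i k. f (x i) (y j) (z k))"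
    by (auto elim!: sampled_tensorsE)
  then show "t \<in> sampled_tensors (\<lambda>y x z. f x y z) Y X Z"
    using sampled_tensorsI[of n2 n1 n3 y Y x X z Z "\<lambda>y x z. f x y z"] by simp
qed

lemma sampled_tensors_rotate:
  "sampled_tensors (\<lambda>z x y. f x y z) Z X Y =
     (\<lambda>(n1, n2, n3, T). (n3, n1, n2, \<lambda>k i j. T i j k)) ` sampled_tensors f X Y Z"
proof (intro equalityI subsetI)
  fix t assume "t \<in> sampled_tensors (\<lambda>z x y. f x y z) Z X Y"
  then obtain n1 n2 n3 z x y where "n1 > 0" "n2 > 0" "n3 > 0" "\<forall>k<n1. z k \<in> Z"
    "\<forall>i<n2. x i \<in> X" "\<forall>j<n3. y j \<in> Y" "t = (n1, n2, n3, \<lambda>k i j. f (x i) (y j) (z k))"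
    by (rule sampled_tensorsE)
  then show "t \<in> (\<lambda>(n1, n2, n3, T). (n3, n1, n2, \<lambda>k i j. T i j k)) ` sampled_tensors f X Y Z"
    by (intro image_eqI[OF _ sampled_tensorsI[of n2 n3 n1 x X y Y z Z f]]) auto
next
  fix t assume "t \<in> (\<lambda>(n1, n2, n3, T). (n3, n1, n2, \<lambda>k i j. T i j k)) ` sampled_tensors f X Y Z"
  then obtain n1 n2 n3 x y z where "n1 > 0" "n2 > 0" "n3 > 0" "\<forall>i<n1. x i \<in> X"
    "\<forall>j<n2. y j \<in> Y" "\<forall>k<n3. z k \<in> Z" "t = (n3, n1, n2, \<lambda>k i j. f (x i) (y j) (z k))"
    by (auto elim!: sampled_tensorsE)
  then show "t \<in> sampled_tensors (\<lambda>z x y. f x y z) Z X Y"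
    using sampled_tensorsI[of n3 n1 n2 z Z x X y Y "\<lambda>z x y. f x y z"] by simp
qed

lemma Frank_mode2_eq_mode1_swap12:
  "fst (snd (Frank f X Y Z)) = fst (Frank (\<lambda>y x z. f x y z) Y X Z)"
  unfolding Frank_def fst_conv snd_conv sampled_tensors_swap12[of f] SUP_image
  by (intro SUP_cong) (auto simp: unfold2_eq_unfold1_swap12)

lemma Frank_mode3_eq_mode1_rotate:
  "snd (snd (Frank f X Y Z)) = fst (Frank (\<lambda>z x y. f x y z) Z X Y)"
  unfolding Frank_def fst_conv snd_conv sampled_tensors_rotate[of f] SUP_image
  by (intro SUP_cong) (auto simp: unfold3_eq_unfold1_rotate)

lemma Frank_mode1_mode_prod3_le:
  "fst (Frank (\<lambda>x y z. mode_prod3 C r1 r2 r3 (gx x) (gy y) (gz z)) X Y Z) \<le> enat r1"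
  unfolding Frank_def fst_conv
proof (rule SUP_least, clarify)
  fix n1 n2 n3 T
  assume "(n1, n2, n3, T) \<in> sampled_tensors (\<lambda>x y z. mode_prod3 C r1 r2 r3 (gx x) (gy y) (gz z)) X Y Z"
  then obtain x y z where T: "T = (\<lambda>i j k. mode_prod3 C r1 r2 r3 (gx (x i)) (gy (y j)) (gz (z k)))"
    by (auto elim!: sampled_tensorsE)
  have "vec_space.rank n1 (unfold1 n1 n2 n3 T) \<le> r1"
    unfolding unfold1_def T mode_prod3_nested
    by (rule vec_space.rank_le_of_sum_of_products)
  then show "enat (mrank (unfold1 n1 n2 n3 T)) \<le> enat r1"
    by (simp add: mrank_def unfold1_def)
qed

lemma Frank_mode_prod3_le:
  fixes C :: "nat \<Rightarrow> nat \<Rightarrow> nat \<Rightarrow> real" and r1 r2 r3 :: nat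
    and gx gy gz :: "real \<Rightarrow> nat \<Rightarrow> real"
  defines "g \<equiv> \<lambda>x y z. mode_prod3 C r1 r2 r3 (gx x) (gy y) (gz z)"
  shows "fst (Frank g X Y Z) \<le> enat r1" "fst (snd (Frank g X Y Z)) \<le> enat r2"
    "snd (snd (Frank g X Y Z)) \<le> enat r3"
proof -
  show "fst (Frank g X Y Z) \<le> enat r1"
    unfolding g_def by (rule Frank_mode1_mode_prod3_le)
  have "(\<lambda>y x z. g x y z) = (\<lambda>y x z. mode_prod3 (\<lambda>j i k. C i j k) r2 r1 r3 (gy y) (gx x) (gz z))"
    unfolding g_def by (intro ext) (rule mode_prod3_swap12)
  then show "fst (snd (Frank g X Y Z)) \<le> enat r2"
    unfolding Frank_mode2_eq_mode1_swap12 by (simp only: Frank_mode1_mode_prod3_le)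
  have "(\<lambda>z x y. g x y z) = (\<lambda>z x y. mode_prod3 (\<lambda>k i j. C i j k) r3 r1 r2 (gz z) (gx x) (gy y))"
    unfolding g_def by (intro ext) (rule mode_prod3_rotate)
  then show "snd (snd (Frank g X Y Z)) \<le> enat r3"
    unfolding Frank_mode3_eq_mode1_rotate by (simp only: Frank_mode1_mode_prod3_le)
qed

lemma diagonal_fibers_in_cols_unfold1:
  "set (cols (mat n m (\<lambda>(i, j). T i j j))) \<subseteq> set (cols (unfold1 n m m T))"
proof
  fix v assume "v \<in> set (cols (mat n m (\<lambda>(i, j). T i j j)))"
  then obtain j where j: "j < m" and v: "v = col (mat n m (\<lambda>(i, j). T i j j)) j"
    by (auto simp: in_set_conv_nth)
  have "j + m * j < m * m"
    using j mult_le_mono2[of "Suc j" m m] by (simp add: mult.commute)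
  moreover have "v = col (unfold1 n m m T) (j + m * j)"
    using j v calculation by (auto simp: unfold1_def intro!: eq_vecI)
  ultimately show "v \<in> set (cols (unfold1 n m m T))"
    by (auto simp: in_set_conv_nth unfold1_def intro!: exI[of _ "j + m * j"])
qed

lemma nonsingular_sample_le_Frank_mode1:
  assumes R: "fst (Frank f X Y Z) = enat R"
    and xs: "\<forall>i<n. xs i \<in> X" and ws: "\<forall>j<n. ws j \<in> Y \<times> Z"
    and det: "det (mat n n (\<lambda>(i, j). f (xs i) (fst (ws j)) (snd (ws j)))) \<noteq> 0"
  shows "n \<le> R"
proof (cases "n = 0")
  case False
  define T where "T i j k = f (xs i) (fst (ws j)) (snd (ws k))" for i j k
  have "(n, n, n, T) \<in> sampled_tensors f X Y Z"
    unfolding T_def using False xs ws by (intro sampled_tensorsI) (auto simp: mem_Times_iff)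
  then have "enat (mrank (unfold1 n n n T)) \<le> fst (Frank f X Y Z)"
    unfolding Frank_def fst_conv by (rule SUP_upper2) simp
  moreover have "n \<le> vec_space.rank n (unfold1 n n n T)"
    using det diagonal_fibers_in_cols_unfold1[of n n T]
    by (intro vec_space.rank_ge_of_nonsingular_cols_subset) (auto simp: T_def unfold1_def)
  ultimately show ?thesis using R by (simp add: mrank_def unfold1_def)
qed simp

lemma Frank_mode1_expansion:
  assumes bounded: "bounded_fun3 f X Y Z" and R: "fst (Frank f X Y Z) = enat R"
  obtains U N xs L where "bounded_vec_fun R X U" "\<forall>i<(N :: nat). xs i \<in> X"
    "\<And>v y z. v \<in> X \<Longrightarrow> y \<in> Y \<Longrightarrow> z \<in> Z \<Longrightarrow>
       f v y z = (\<Sum>i<N. (\<Sum>a<R. U v a * L a i) * f (xs i) y z)"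
proof -
  obtain r xs ws L where r: "r \<le> R" and xs: "\<forall>i<r. xs i \<in> X" and ws: "\<forall>j<r. ws j \<in> Y \<times> Z"
    and skeleton: "\<And>v w. v \<in> X \<Longrightarrow> w \<in> Y \<times> Z \<Longrightarrow> f v (fst w) (snd w) =
       (\<Sum>a<r. f v (fst (ws a)) (snd (ws a)) * (\<Sum>i<r. L a i * f (xs i) (fst w) (snd w)))"
    using skeleton_decomposition[where F = "\<lambda>v w. f v (fst w) (snd w)"]
      nonsingular_sample_le_Frank_mode1[OF R] by blast
  define U where "U v a = (if a < r then f v (fst (ws a)) (snd (ws a)) else 0)" for v a
  obtain B where B: "\<forall>v\<in>X. \<forall>y\<in>Y. \<forall>z\<in>Z. \<bar>f v y z\<bar> \<le> B"
    using bounded unfolding bounded_fun3_def by blast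
  have bounded_U: "bounded_vec_fun R X U"
    unfolding bounded_vec_fun_def U_def using B ws by (intro exI[of _ "\<bar>B\<bar>"])
      (auto simp: mem_Times_iff intro: order_trans[OF _ abs_ge_self])
  have expansion: "f v y z = (\<Sum>i<r. (\<Sum>a<R. U v a * L a i) * f (xs i) y z)"
    if "v \<in> X" "y \<in> Y" "z \<in> Z" for v y z
  proof -
    have "f v y z = (\<Sum>a<r. U v a * (\<Sum>i<r. L a i * f (xs i) y z))"
      using skeleton[of v "(y, z)"] that by (simp add: U_def)
    also have "\<dots> = (\<Sum>a<R. U v a * (\<Sum>i<r. L a i * f (xs i) y z))"
      using r by (intro sum.mono_neutral_left) (auto simp: U_def)
    also have "\<dots> = (\<Sum>i<r. (\<Sum>a<R. U v a * L a i) * f (xs i) y z)"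
      unfolding sum_distrib_left sum_distrib_right by (subst sum.swap) (simp add: mult_ac)
    finally show ?thesis .
  qed
  show ?thesis by (rule that[of U r xs L, OF bounded_U xs expansion])
qed

lemma ex_mode_prod3_of_mode_expansions:
  fixes f :: "'x \<Rightarrow> 'y \<Rightarrow> 'z \<Rightarrow> real" and N1 N2 N3 :: nat
  assumes expand1: "\<And>v1 v2 v3. v1 \<in> X \<Longrightarrow> v2 \<in> Y \<Longrightarrow> v3 \<in> Z \<Longrightarrow>
      f v1 v2 v3 = (\<Sum>i<N1. (\<Sum>a<r1. U1 v1 a * L1 a i) * f (xs i) v2 v3)"
    \<comment> \<open>each expansion quantifies its own variable first, as Frank_mode1_expansion yields it
      for the permuted function\<close>
    and expand2: "\<And>v2 v1 v3. v2 \<in> Y \<Longrightarrow> v1 \<in> X \<Longrightarrow> v3 \<in> Z \<Longrightarrow>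
      f v1 v2 v3 = (\<Sum>j<N2. (\<Sum>b<r2. U2 v2 b * L2 b j) * f v1 (ys j) v3)"
    and expand3: "\<And>v3 v1 v2. v3 \<in> Z \<Longrightarrow> v1 \<in> X \<Longrightarrow> v2 \<in> Y \<Longrightarrow>
      f v1 v2 v3 = (\<Sum>k<N3. (\<Sum>c<r3. U3 v3 c * L3 c k) * f v1 v2 (zs k))"
    and xs: "\<forall>i<N1. xs i \<in> X" and ys: "\<forall>j<N2. ys j \<in> Y"
  shows "\<exists>C. \<forall>v1\<in>X. \<forall>v2\<in>Y. \<forall>v3\<in>Z.
    f v1 v2 v3 = mode_prod3 C r1 r2 r3 (U1 v1) (U2 v2) (U3 v3)"
proof -
  define T where "T i j k = f (xs i) (ys j) (zs k)" for i j k
  define C where "C a b c = (\<Sum>j<N2. L2 b j * (\<Sum>k<N3. L3 c k * (\<Sum>i<N1. L1 a i * T i j k)))"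
    for a b c
  have "f v1 v2 v3 = mode_prod3 C r1 r2 r3 (U1 v1) (U2 v2) (U3 v3)"
    if v: "v1 \<in> X" "v2 \<in> Y" "v3 \<in> Z" for v1 v2 v3
  proof -
    have expand2': "f (xs i) v2 v3 = (\<Sum>j<N2. (\<Sum>b<r2. U2 v2 b * L2 b j) * f (xs i) (ys j) v3)"
      if "i < N1" for i
      using expand2 xs v(2,3) that by blast
    have expand3': "f (xs i) (ys j) v3 = (\<Sum>k<N3. (\<Sum>c<r3. U3 v3 c * L3 c k) * T i j k)"
      if "i < N1" "j < N2" for i j
      unfolding T_def using expand3 xs ys v(3) that by blast
    have "f v1 v2 v3 = (\<Sum>i<N1. (\<Sum>a<r1. U1 v1 a * L1 a i) * (\<Sum>j<N2. (\<Sum>b<r2. U2 v2 b * L2 b j) *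
        (\<Sum>k<N3. (\<Sum>c<r3. U3 v3 c * L3 c k) * T i j k)))"
      unfolding expand1[OF v] by (simp add: expand2' expand3')
    also have "\<dots> = mode_prod3 T N1 N2 N3 (\<lambda>i. \<Sum>a<r1. U1 v1 a * L1 a i)
        (\<lambda>j. \<Sum>b<r2. U2 v2 b * L2 b j) (\<lambda>k. \<Sum>c<r3. U3 v3 c * L3 c k)"
      by (rule mode_prod3_nested[symmetric])
    also have "\<dots> = mode_prod3 C r1 r2 r3 (U1 v1) (U2 v2) (U3 v3)"
      \<comment> \<open>three rounds of contracting mode 1 and rotating restore the mode order\<close>
      unfolding C_def by (simp only: mode_prod3_mode1_lincomb_rotate)
    finally show ?thesis .
  qed
  then show ?thesis by blast
qed

lemma ex_mode_prod3_of_Frank: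
  assumes bounded: "bounded_fun3 f X Y Z"
    and Frank: "Frank f X Y Z = (enat r1, enat r2, enat r3)"
  shows "\<exists>C fx fy fz. bounded_vec_fun r1 X fx \<and> bounded_vec_fun r2 Y fy \<and> bounded_vec_fun r3 Z fz \<and>
    (\<forall>v1\<in>X. \<forall>v2\<in>Y. \<forall>v3\<in>Z. f v1 v2 v3 = mode_prod3 C r1 r2 r3 (fx v1) (fy v2) (fz v3))"
proof -
  have bounded2: "bounded_fun3 (\<lambda>y x z. f x y z) Y X Z"
    and bounded3: "bounded_fun3 (\<lambda>z x y. f x y z) Z X Y"
    using bounded unfolding bounded_fun3_def by blast+
  have R1: "fst (Frank f X Y Z) = enat r1"
    and R2: "fst (Frank (\<lambda>y x z. f x y z) Y X Z) = enat r2"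
    and R3: "fst (Frank (\<lambda>z x y. f x y z) Z X Y) = enat r3"
    using Frank Frank_mode2_eq_mode1_swap12[of f X Y Z] Frank_mode3_eq_mode1_rotate[of f X Y Z]
    by simp_all
  obtain U1 N1 xs L1 where U1: "bounded_vec_fun r1 X U1" and xs: "\<forall>i<(N1 :: nat). xs i \<in> X"
    and expand1: "\<And>v1 v2 v3. v1 \<in> X \<Longrightarrow> v2 \<in> Y \<Longrightarrow> v3 \<in> Z \<Longrightarrow>
       f v1 v2 v3 = (\<Sum>i<N1. (\<Sum>a<r1. U1 v1 a * L1 a i) * f (xs i) v2 v3)"
    by (fact Frank_mode1_expansion[OF bounded R1])
  obtain U2 N2 ys L2 where U2: "bounded_vec_fun r2 Y U2" and ys: "\<forall>j<(N2 :: nat). ys j \<in> Y"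
    and expand2: "\<And>v2 v1 v3. v2 \<in> Y \<Longrightarrow> v1 \<in> X \<Longrightarrow> v3 \<in> Z \<Longrightarrow>
       f v1 v2 v3 = (\<Sum>j<N2. (\<Sum>b<r2. U2 v2 b * L2 b j) * f v1 (ys j) v3)"
    by (fact Frank_mode1_expansion[OF bounded2 R2])
  obtain U3 N3 zs L3 where U3: "bounded_vec_fun r3 Z U3" and "\<forall>k<(N3 :: nat). zs k \<in> Z"
    and expand3: "\<And>v3 v1 v2. v3 \<in> Z \<Longrightarrow> v1 \<in> X \<Longrightarrow> v2 \<in> Y \<Longrightarrow>
       f v1 v2 v3 = (\<Sum>k<N3. (\<Sum>c<r3. U3 v3 c * L3 c k) * f v1 v2 (zs k))"
    by (fact Frank_mode1_expansion[OF bounded3 R3])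
  have "\<exists>C. \<forall>v1\<in>X. \<forall>v2\<in>Y. \<forall>v3\<in>Z. f v1 v2 v3 = mode_prod3 C r1 r2 r3 (U1 v1) (U2 v2) (U3 v3)"
    by (rule ex_mode_prod3_of_mode_expansions[where f = f, OF expand1 expand2 expand3 xs ys])
  with U1 U2 U3 show ?thesis by blast
qed

theorem theorem2:
  shows
  "(\<forall>(f :: real \<Rightarrow> real \<Rightarrow> real \<Rightarrow> real) Xf Yf Zf (r1::nat) (r2::nat) (r3::nat).
      bounded_fun3 f Xf Yf Zf \<longrightarrow> Frank f Xf Yf Zf = (enat r1, enat r2, enat r3) \<longrightarrow>
      (\<exists>C fx fy fz. bounded_vec_fun r1 Xf fx \<and> bounded_vec_fun r2 Yf fy \<and>
                    bounded_vec_fun r3 Zf fz \<and>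
         (\<forall>v1\<in>Xf. \<forall>v2\<in>Yf. \<forall>v3\<in>Zf.
            f v1 v2 v3 = mode_prod3 C r1 r2 r3 (fx v1) (fy v2) (fz v3))))
   \<and>
   (\<forall>(C :: nat \<Rightarrow> nat \<Rightarrow> nat \<Rightarrow> real) (r1::nat) (r2::nat) (r3::nat) Xg Yg Zg gx gy gz.
      bounded_vec_fun r1 Xg gx \<longrightarrow> bounded_vec_fun r2 Yg gy \<longrightarrow> bounded_vec_fun r3 Zg gz \<longrightarrow>
      (let g = (\<lambda>v1 v2 v3. mode_prod3 C r1 r2 r3 (gx v1) (gy v2) (gz v3))
       in fst (Frank g Xg Yg Zg) \<le> enat r1 \<and> fst (snd (Frank g Xg Yg Zg)) \<le> enat r2 \<and>
          snd (snd (Frank g Xg Yg Zg)) \<le> enat r3))"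
  \<comment> \<open>part (ii) does not need the boundedness hypotheses\<close>
  by (intro conjI allI impI ex_mode_prod3_of_Frank) (simp_all add: Let_def Frank_mode_prod3_le)

end
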